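(* Let $D_{\hat 1},D_{\hat 2},D_{\hat 3},D_{\hat 4}$ be positive real numbers (with $D_{\hat i}$ standing for $D_{[4]\setminus\{i\}}$, $[4]=\{1,2,3,4\}$). There exists a positive-weighted (simple, finite) graph $\mathcal G=(G,w)$ with $[4]\subseteq V(G)$ such that $D_{\hat i}(\mathcal G)=D_{\hat i}$ for $i=1,2,3,4$ if and only if (i) $5D_{\hat t}\le 3D_{\hat k}+3D_{\hat j}+2D_{\hat i}$ for all pairwise distinct $i,j,k,t\in[4]$, and (ii) $D_{\hat i}<D_{\hat k}+D_{\hat j}$ for all pairwise distinct $i,j,k\in[4]$.
   Context: All graphs are simple and finite. A positive-weighted graph $\mathcal G=(G,w)$ is a graph $G$ with a function $w:E(G)\to\mathbb R_{>0}$; for a subgraph $G'$, $w(G')$ is the sum of the weights of the edges of $G'$. For distinct vertices $i_1,\dots,i_k$ of $G$, $D_{\{i_1,\dots,i_k\}}(\mathcal G)$ is the minimum of $w(R)$ over all connected subgraphs $R$ of $G$ whose vertex set contains $i_1,\dots,i_k$. We write $D_{\hat i}(\mathcal G)=D_{[4]\setminus\{i\}}(\mathcal G)$. The graph may have vertices other than $1,2,3,4$. *)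

theory Defs
  imports Complex_Main
begin

definition simple_graph :: "nat set \<Rightarrow> nat set set \<Rightarrow> bool" where
  "simple_graph V E \<longleftrightarrow> finite V \<and> (\<forall>e\<in>E. \<exists>u v. u \<noteq> v \<and> u \<in> V \<and> v \<in> V \<and> e = {u, v})"

definition pos_weighted_graph :: "nat set \<Rightarrow> nat set set \<Rightarrow> (nat set \<Rightarrow> real) \<Rightarrow> bool" where
  "pos_weighted_graph V E w \<longleftrightarrow> simple_graph V E \<and> (\<forall>e\<in>E. w e > 0)"

definition connected_subgraph :: "nat set \<Rightarrow> nat set set \<Rightarrow> nat set \<Rightarrow> nat set set \<Rightarrow> bool" where
  "connected_subgraph V E V' E' \<longleftrightarrow> V' \<subseteq> V \<and> E' \<subseteq> E \<and> (\<forall>e\<in>E'. e \<subseteq> V') \<and> V' \<noteq> {} \<and>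
     (\<forall>x\<in>V'. \<forall>y\<in>V'. (\<lambda>a b. {a, b} \<in> E')\<^sup>*\<^sup>* x y)"

definition conn_weights :: "nat set \<Rightarrow> nat set set \<Rightarrow> (nat set \<Rightarrow> real) \<Rightarrow> nat set \<Rightarrow> real set" where
  "conn_weights V E w S = {sum w E' | V' E'. connected_subgraph V E V' E' \<and> S \<subseteq> V'}"

text \<open>D_S(G): minimum weight of a connected subgraph containing S (meaningful when
conn_weights is nonempty; the theorem requires this explicitly).\<close>
definition D :: "nat set \<Rightarrow> nat set set \<Rightarrow> (nat set \<Rightarrow> real) \<Rightarrow> nat set \<Rightarrow> real" where
  "D V E w S = Min (conn_weights V E w S)"

definition D_hat :: "nat set \<Rightarrow> nat set set \<Rightarrow> (nat set \<Rightarrow> real) \<Rightarrow> nat \<Rightarrow> real" where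
  "D_hat V E w i = D V E w ({1,2,3,4} - {i})"

end

theory Submission
  imports Defs
begin

text \<open>
  A cheapest connected subgraph spanning three terminals is a star of geodesics: for every
  pseudometric bounded by the edge weights, any connected subgraph containing \<open>a\<close>, \<open>b\<close>,
  \<open>c\<close> has a vertex \<open>p\<close> with \<open>d p a + d p b + d p c\<close> at most its weight (induction on
  the edges). For the graph distance this yields a Steiner centre for each triple, and (i)
  and (ii) are sums of triangle inequalities through these centres. For maxima of potentials
  that vary by at most the weight along edges it certifies exact values of \<open>D\<close> in explicit
  graphs: a star around a new vertex when \<open>2 D\<^sub>t\<close> is below the sum of the other three
  values for every \<open>t\<close>, a star around \<open>t\<close> when equality holds, and otherwise a graph with
  three hubs, each joined to \<open>t\<close> and to two of the other terminals.
\<close>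

abbreviation adj :: "nat set set \<Rightarrow> nat \<Rightarrow> nat \<Rightarrow> bool" where
  "adj F \<equiv> \<lambda>x y. {x, y} \<in> F"

lemma adj_rtranclp_sym: "(adj F)\<^sup>*\<^sup>* x y \<Longrightarrow> (adj F)\<^sup>*\<^sup>* y x"
  by (metis (no_types, lifting) insert_commute sympD sympI symp_rtranclp)

lemma adj_rtranclp_mono: "(adj F)\<^sup>*\<^sup>* x y \<Longrightarrow> F \<subseteq> F' \<Longrightarrow> (adj F')\<^sup>*\<^sup>* x y"
  by (induction rule: rtranclp_induct) (auto intro: rtranclp.rtrancl_into_rtrancl)

lemma adj_empty_rtranclp: "(adj {})\<^sup>*\<^sup>* x y \<Longrightarrow> x = y"
  by (induction rule: rtranclp_induct) auto

lemma connected_subgraph_Un: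
  assumes G1: "connected_subgraph V E V1 E1" and G2: "connected_subgraph V E V2 E2"
    and "V1 \<inter> V2 \<noteq> {}"
  shows "connected_subgraph V E (V1 \<union> V2) (E1 \<union> E2)"
proof -
  obtain z where z: "z \<in> V1" "z \<in> V2" using assms(3) by blast
  have "(adj E1)\<^sup>*\<^sup>* x z" if "x \<in> V1" for x
    using G1 that z(1) unfolding connected_subgraph_def by simp
  then have "(adj (E1 \<union> E2))\<^sup>*\<^sup>* x z" if "x \<in> V1" for x
    using that adj_rtranclp_mono[of E1 x z "E1 \<union> E2"] by blast
  moreover have "(adj E2)\<^sup>*\<^sup>* x z" if "x \<in> V2" for x
    using G2 that z(2) unfolding connected_subgraph_def by simp
  then have "(adj (E1 \<union> E2))\<^sup>*\<^sup>* x z" if "x \<in> V2" for x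
    using that adj_rtranclp_mono[of E2 x z "E1 \<union> E2"] by blast
  ultimately have to_z: "(adj (E1 \<union> E2))\<^sup>*\<^sup>* x z" if "x \<in> V1 \<union> V2" for x
    using that by blast
  have "(adj (E1 \<union> E2))\<^sup>*\<^sup>* x y" if "x \<in> V1 \<union> V2" "y \<in> V1 \<union> V2" for x y
    using to_z[OF that(1)] adj_rtranclp_sym[OF to_z[OF that(2)]] by (rule rtranclp_trans)
  with G1 G2 show ?thesis unfolding connected_subgraph_def by auto
qed

lemma connected_subgraph_singleton: "x \<in> V \<Longrightarrow> connected_subgraph V E {x} {}"
  unfolding connected_subgraph_def by auto

definition star_edges :: "nat \<Rightarrow> nat set \<Rightarrow> nat set set" where
  "star_edges h S = (\<lambda>s. {h, s}) ` (S - {h})"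

lemma connected_subgraph_star_edges:
  assumes "h \<in> V" "S \<subseteq> V" "star_edges h S \<subseteq> E"
  shows "connected_subgraph V E (insert h S) (star_edges h S)"
proof -
  have from_h: "(adj (star_edges h S))\<^sup>*\<^sup>* h x" if "x \<in> insert h S" for x
    using that unfolding star_edges_def by (cases "x = h") auto
  have "(adj (star_edges h S))\<^sup>*\<^sup>* x y" if "x \<in> insert h S" "y \<in> insert h S" for x y
    using adj_rtranclp_sym[OF from_h[OF that(1)]] from_h[OF that(2)] by (rule rtranclp_trans)
  with assms show ?thesis unfolding connected_subgraph_def star_edges_def by auto
qed

lemma sum_star_edges_le:
  fixes a :: "nat \<Rightarrow> real"
  assumes "finite S" "a h = 0" "\<forall>s\<in>S. 0 \<le> a s"
  shows "sum (sum a) (star_edges h S) \<le> sum a S"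
proof -
  have "sum (sum a) (star_edges h S) \<le> (\<Sum>s\<in>S - {h}. sum a {h, s})"
    unfolding star_edges_def using assms
    by (intro order_trans[OF sum_image_le]) (auto simp: sum.insert_if)
  also have "\<dots> = sum a (S - {h})"
    using assms(2) by (intro sum.cong) auto
  also have "\<dots> = sum a S"
    using assms(1,2) by (cases "h \<in> S") (auto simp: sum_diff1)
  finally show ?thesis .
qed

locale weighted_graph =
  fixes V :: "nat set" and E :: "nat set set" and w :: "nat set \<Rightarrow> real"
  assumes pos_weighted: "pos_weighted_graph V E w"
begin

lemma finite_vertices: "finite V"
  using pos_weighted unfolding pos_weighted_graph_def simple_graph_def by blast

lemma finite_edges: "finite E"
proof -
  have "E \<subseteq> Pow V"
    using pos_weighted unfolding pos_weighted_graph_def simple_graph_def by auto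
  then show ?thesis using finite_vertices by (simp add: finite_subset)
qed

lemma edge_doubleton:
  assumes "e \<in> E"
  obtains x y where "x \<noteq> y" "x \<in> V" "y \<in> V" "e = {x, y}"
proof -
  have "\<forall>e\<in>E. \<exists>x y. x \<noteq> y \<and> x \<in> V \<and> y \<in> V \<and> e = {x, y}"
    using pos_weighted unfolding pos_weighted_graph_def simple_graph_def by simp
  then show ?thesis using assms that by meson
qed

lemma weight_pos: "e \<in> E \<Longrightarrow> 0 < w e"
  using pos_weighted unfolding pos_weighted_graph_def by blast

lemma sum_weight_nonneg: "F \<subseteq> E \<Longrightarrow> 0 \<le> sum w F"
  using weight_pos by (intro sum_nonneg) (auto intro: less_imp_le)

lemma sum_weight_mono: "F \<subseteq> F' \<Longrightarrow> F' \<subseteq> E \<Longrightarrow> sum w F \<le> sum w F'"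
  using finite_edges weight_pos
  by (intro sum_mono2) (auto intro: less_imp_le finite_subset)

lemma sum_weight_Un_le: "F \<subseteq> E \<Longrightarrow> F' \<subseteq> E \<Longrightarrow> sum w (F \<union> F') \<le> sum w F + sum w F'"
proof -
  assume "F \<subseteq> E" "F' \<subseteq> E"
  then have "finite F" "finite F'" "0 \<le> sum w (F \<inter> F')"
    using finite_edges sum_weight_nonneg[of "F \<inter> F'"] by (auto intro: finite_subset)
  then show ?thesis using sum_Un[of F F' w] by simp
qed

lemma sum_weight_split:
  assumes "F \<subseteq> E" "e \<in> F" "F1 \<union> F2 \<subseteq> F - {e}" "F1 \<inter> F2 = {}"
  shows "sum w F1 + w e + sum w F2 \<le> sum w F"
proof -
  have "finite F" using assms(1) finite_edges by (rule finite_subset)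
  then have "sum w F1 + sum w F2 = sum w (F1 \<union> F2)"
    using assms(3,4) by (intro sum.union_disjoint[symmetric]) (auto intro: finite_subset)
  also have "\<dots> \<le> sum w (F - {e})"
    using assms(1,3) by (intro sum_weight_mono) auto
  also have "\<dots> = sum w F - w e"
    using \<open>finite F\<close> assms(2) by (simp add: sum_diff1)
  finally show ?thesis by simp
qed

lemma finite_conn_weights: "finite (conn_weights V E w S)"
proof -
  have "conn_weights V E w S \<subseteq> (\<lambda>(V', E'). sum w E') ` (Pow V \<times> Pow E)"
    unfolding conn_weights_def connected_subgraph_def by auto
  then show ?thesis
    using finite_vertices finite_edges by (auto intro: finite_subset)
qed

lemma D_le: "connected_subgraph V E V' E' \<Longrightarrow> S \<subseteq> V' \<Longrightarrow> D V E w S \<le> sum w E'"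
  unfolding D_def using finite_conn_weights by (intro Min_le) (auto simp: conn_weights_def)

lemma conn_weights_nonempty: "connected_subgraph V E V' E' \<Longrightarrow> S \<subseteq> V' \<Longrightarrow> conn_weights V E w S \<noteq> {}"
  unfolding conn_weights_def by blast

lemma D_attained:
  assumes "conn_weights V E w S \<noteq> {}"
  obtains V' E' where "connected_subgraph V E V' E'" "S \<subseteq> V'" "D V E w S = sum w E'"
proof -
  have "D V E w S \<in> conn_weights V E w S"
    unfolding D_def using assms finite_conn_weights by (rule Min_in[rotated])
  then show ?thesis using that unfolding conn_weights_def by blast
qed

lemma D_nonneg: "conn_weights V E w S \<noteq> {} \<Longrightarrow> 0 \<le> D V E w S"
  by (elim D_attained) (simp add: connected_subgraph_def sum_weight_nonneg)

lemma D_le_total: "conn_weights V E w S \<noteq> {} \<Longrightarrow> D V E w S \<le> sum w E"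
  by (elim D_attained) (simp add: connected_subgraph_def sum_weight_mono)

lemma D_mono:
  assumes "conn_weights V E w S' \<noteq> {}" "S \<subseteq> S'"
  shows "conn_weights V E w S \<noteq> {}" "D V E w S \<le> D V E w S'"
proof -
  obtain V' E' where "connected_subgraph V E V' E'" "S' \<subseteq> V'" "D V E w S' = sum w E'"
    using assms(1) by (rule D_attained)
  with assms(2) show "conn_weights V E w S \<noteq> {}" "D V E w S \<le> D V E w S'"
    using conn_weights_nonempty D_le by auto
qed

lemma D_Un_le:
  assumes "conn_weights V E w S1 \<noteq> {}" "conn_weights V E w S2 \<noteq> {}" "S1 \<inter> S2 \<noteq> {}"
  shows "conn_weights V E w (S1 \<union> S2) \<noteq> {}" "D V E w (S1 \<union> S2) \<le> D V E w S1 + D V E w S2"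
proof -
  obtain V1 E1 where 1: "connected_subgraph V E V1 E1" "S1 \<subseteq> V1" "D V E w S1 = sum w E1"
    using D_attained assms(1) by blast
  obtain V2 E2 where 2: "connected_subgraph V E V2 E2" "S2 \<subseteq> V2" "D V E w S2 = sum w E2"
    using D_attained assms(2) by blast
  have c: "connected_subgraph V E (V1 \<union> V2) (E1 \<union> E2)"
    using connected_subgraph_Un 1(1,2) 2(1,2) assms(3) by blast
  then show "conn_weights V E w (S1 \<union> S2) \<noteq> {}"
    using conn_weights_nonempty 1(2) 2(2) by blast
  have "D V E w (S1 \<union> S2) \<le> sum w (E1 \<union> E2)"
    using D_le c 1(2) 2(2) by blast
  also have "\<dots> \<le> sum w E1 + sum w E2"
    using 1(1) 2(1) sum_weight_Un_le unfolding connected_subgraph_def by simp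
  finally show "D V E w (S1 \<union> S2) \<le> D V E w S1 + D V E w S2"
    using 1(3) 2(3) by simp
qed

lemma adj_rtranclp_closed:
  assumes "(adj F)\<^sup>*\<^sup>* z x" "z \<in> U" "\<forall>e\<in>F. e \<subseteq> U"
  shows "x \<in> U"
  using assms by (induction rule: rtranclp_induct) auto

lemma connected_subgraph_component:
  assumes G: "connected_subgraph V E V' E'" and "F \<subseteq> E'" "z \<in> V'"
  defines "R \<equiv> {x. (adj F)\<^sup>*\<^sup>* z x}"
  shows "connected_subgraph V E R {e \<in> F. e \<subseteq> R}"
proof -
  have F: "\<forall>e\<in>F. e \<subseteq> V'" "V' \<subseteq> V" "F \<subseteq> E"
    using G assms(2) unfolding connected_subgraph_def by auto
  have "R \<subseteq> V"
    using adj_rtranclp_closed[OF _ assms(3) F(1)] F(2) unfolding R_def by auto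
  have from_z: "(adj {e \<in> F. e \<subseteq> R})\<^sup>*\<^sup>* z x" if "(adj F)\<^sup>*\<^sup>* z x" for x
    using that
  proof (induction rule: rtranclp_induct)
    case (step y x)
    then have "{y, x} \<in> {e \<in> F. e \<subseteq> R}"
      unfolding R_def by (auto intro: rtranclp.rtrancl_into_rtrancl)
    with step.IH show ?case by (rule rtranclp.rtrancl_into_rtrancl)
  qed simp
  have "(adj {e \<in> F. e \<subseteq> R})\<^sup>*\<^sup>* x y" if "x \<in> R" "y \<in> R" for x y
    using rtranclp_trans[OF adj_rtranclp_sym[OF from_z] from_z] that unfolding R_def by simp
  with \<open>R \<subseteq> V\<close> F(3) show ?thesis
    unfolding connected_subgraph_def R_def by auto
qed

lemma connected_subgraph_reach_after_delete:
  assumes G: "connected_subgraph V E V' E'" and e: "{u, v} \<in> E'" and "x \<in> V'"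
  shows "(adj (E' - {{u, v}}))\<^sup>*\<^sup>* u x \<or> (adj (E' - {{u, v}}))\<^sup>*\<^sup>* v x"
proof -
  have "u \<in> V'" using G e unfolding connected_subgraph_def by auto
  then have "(adj E')\<^sup>*\<^sup>* u x" using G assms(3) unfolding connected_subgraph_def by simp
  then show ?thesis
  proof (induction rule: rtranclp_induct)
    case (step y x)
    show ?case
    proof (cases "{y, x} = {u, v}")
      case True
      then show ?thesis by (auto simp: doubleton_eq_iff)
    next
      case False
      with step have "{y, x} \<in> E' - {{u, v}}" by simp
      with step.IH show ?thesis by (auto intro: rtranclp.rtrancl_into_rtrancl)
    qed
  qed simp
qed
lemma connected_subgraph_delete_edge:
  assumes G: "connected_subgraph V E V' E'" and e: "{u, v} \<in> E'"
  obtains "connected_subgraph V E V' (E' - {{u, v}})"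
  | Vu Eu Vv Ev where "connected_subgraph V E Vu Eu" "connected_subgraph V E Vv Ev"
      "u \<in> Vu" "v \<in> Vv" "V' = Vu \<union> Vv" "Eu \<union> Ev \<subseteq> E' - {{u, v}}" "Eu \<inter> Ev = {}"
proof -
  define F where "F = E' - {{u, v}}"
  define R where "R z = {x. (adj F)\<^sup>*\<^sup>* z x}" for z
  have sub: "\<forall>e\<in>E'. e \<subseteq> V'" "V' \<subseteq> V" "E' \<subseteq> E" "\<forall>x\<in>V'. \<forall>y\<in>V'. (adj E')\<^sup>*\<^sup>* x y"
    using G unfolding connected_subgraph_def by auto
  have uv: "u \<in> V'" "v \<in> V'" using sub(1) e by auto
  have cover: "x \<in> R u \<union> R v" if "x \<in> V'" for x
    using connected_subgraph_reach_after_delete[OF G e that] unfolding R_def F_def by blast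
  have "F \<subseteq> E'" unfolding F_def by blast
  have closed: "R z \<subseteq> V'" if "z \<in> V'" for z
    using adj_rtranclp_closed[OF _ that] sub(1) \<open>F \<subseteq> E'\<close> unfolding R_def by blast
  show ?thesis
  proof (cases "v \<in> R u")
    case True
    then have "x \<in> R u" if "x \<in> V'" for x
      using cover[OF that] unfolding R_def by (auto intro: rtranclp_trans)
    then have "(adj F)\<^sup>*\<^sup>* x y" if "x \<in> V'" "y \<in> V'" for x y
      using rtranclp_trans[OF adj_rtranclp_sym] that unfolding R_def by blast
    with G \<open>F \<subseteq> E'\<close> have "connected_subgraph V E V' F"
      unfolding connected_subgraph_def by auto
    then show ?thesis using that(1) unfolding F_def by blast
  next
    case False
    have "R u \<inter> R v = {}"
      using False adj_rtranclp_sym unfolding R_def by (auto intro: rtranclp_trans)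
    moreover have "e \<noteq> {}" if "e \<in> F" for e
      using that \<open>F \<subseteq> E'\<close> sub(3) by (auto elim: edge_doubleton)
    ultimately have "{e \<in> F. e \<subseteq> R u} \<inter> {e \<in> F. e \<subseteq> R v} = {}"
      by blast
    moreover have "V' = R u \<union> R v"
      using cover closed uv by blast
    moreover have "u \<in> R u" "v \<in> R v" unfolding R_def by simp_all
    ultimately show ?thesis
      using that(2) connected_subgraph_component[OF G \<open>F \<subseteq> E'\<close>] uv
      unfolding F_def R_def by blast
  qed
qed

section \<open>Steiner centres of three terminals\<close>

definition edge_bounded_pseudometric :: "(nat \<Rightarrow> nat \<Rightarrow> real) \<Rightarrow> bool" where
  "edge_bounded_pseudometric f \<longleftrightarrow> (\<forall>x\<in>V. f x x = 0) \<and> (\<forall>x y. f x y = f y x) \<and>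
     (\<forall>x y z. f x z \<le> f x y + f y z) \<and> (\<forall>x y. {x, y} \<in> E \<longrightarrow> f x y \<le> w {x, y})"

lemma edge_bounded_pseudometric_nonneg:
  assumes "edge_bounded_pseudometric f" "x \<in> V"
  shows "0 \<le> f x y"
proof -
  have "f x x \<le> f x y + f y x" "f x x = 0" "f y x = f x y"
    using assms unfolding edge_bounded_pseudometric_def by blast+
  then show ?thesis by simp
qed

definition steiner_bounded :: "(nat \<Rightarrow> nat \<Rightarrow> real) \<Rightarrow> nat set \<Rightarrow> real \<Rightarrow> bool" where
  "steiner_bounded f U S \<longleftrightarrow> (\<forall>a\<in>U. \<forall>b\<in>U. \<forall>c\<in>U. \<exists>p\<in>U. f p a + f p b + f p c \<le> S)"

lemma steiner_bounded_mono: "steiner_bounded f U S \<Longrightarrow> S \<le> S' \<Longrightarrow> steiner_bounded f U S'"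
  unfolding steiner_bounded_def by (meson order_trans)

lemma steiner_bound_join:
  assumes f: "edge_bounded_pseudometric f"
    and "Vu \<subseteq> V" "Vv \<subseteq> V" "u \<in> Vu" "v \<in> Vv" "f u v \<le> c"
    and hu: "steiner_bounded f Vu Su" and hv: "steiner_bounded f Vv Sv"
    and "x \<in> Vu" "y \<in> Vu" "z \<in> Vu \<union> Vv"
  shows "\<exists>p\<in>Vu. f p x + f p y + f p z \<le> Su + c + Sv"
proof -
  have nonneg: "0 \<le> f p q" if "p \<in> Vu \<union> Vv" for p q
    using edge_bounded_pseudometric_nonneg[OF f] that assms(2,3) by blast
  have tri: "f x z \<le> f x y + f y z" for x y z
    using f unfolding edge_bounded_pseudometric_def by blast
  have sym: "f x y = f y x" for x y
    using f unfolding edge_bounded_pseudometric_def by blast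
  have "0 \<le> c" using nonneg[of u v] assms(4,6) by simp
  have dist_v: "f v z' \<le> Sv" if z': "z' \<in> Vv" for z'
  proof -
    obtain q where "q \<in> Vv" "f q v + f q z' + f q z' \<le> Sv"
      using hv[unfolded steiner_bounded_def, rule_format, OF assms(5) z' z'] by blast
    moreover have "f v z' \<le> f q v + f q z'" using tri[of v z' q] sym[of v q] by simp
    ultimately show ?thesis using nonneg[of q z'] by simp
  qed
  show ?thesis
  proof (cases "z \<in> Vu")
    case True
    then obtain p where "p \<in> Vu" "f p x + f p y + f p z \<le> Su"
      using hu[unfolded steiner_bounded_def, rule_format, OF assms(9,10) True] by blast
    moreover have "0 \<le> Sv" using dist_v[OF assms(5)] nonneg[of v v] assms(5) by simp
    ultimately show ?thesis using \<open>0 \<le> c\<close> by force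
  next
    case False
    obtain p where p: "p \<in> Vu" "f p x + f p y + f p u \<le> Su"
      using hu[unfolded steiner_bounded_def, rule_format, OF assms(9,10,4)] by blast
    have "f p z \<le> f p u + f u v + f v z"
      using tri[of p z u] tri[of u z v] by simp
    with p dist_v[of z] False assms(6,11) show ?thesis by force
  qed
qed

lemma steiner_bound_Un:
  assumes f: "edge_bounded_pseudometric f"
    and "Vu \<subseteq> V" "Vv \<subseteq> V" "u \<in> Vu" "v \<in> Vv" "f u v \<le> c"
    and hu: "steiner_bounded f Vu Su" and hv: "steiner_bounded f Vv Sv"
  shows "steiner_bounded f (Vu \<union> Vv) (Su + c + Sv)"
  unfolding steiner_bounded_def
proof (intro ballI)
  fix a b c' assume abc: "a \<in> Vu \<union> Vv" "b \<in> Vu \<union> Vv" "c' \<in> Vu \<union> Vv"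
  have "f v u \<le> c" using f assms(6) unfolding edge_bounded_pseudometric_def by metis
  note join_u = steiner_bound_join[OF f assms(2-5,6) hu hv]
    and join_v = steiner_bound_join[OF f assms(3,2,5,4) \<open>f v u \<le> c\<close> hv hu]
  consider "a \<in> Vu" "b \<in> Vu" | "a \<in> Vu" "c' \<in> Vu" | "b \<in> Vu" "c' \<in> Vu"
    | "a \<in> Vv" "b \<in> Vv" | "a \<in> Vv" "c' \<in> Vv" | "b \<in> Vv" "c' \<in> Vv"
    using abc by blast
  then show "\<exists>p\<in>Vu \<union> Vv. f p a + f p b + f p c' \<le> Su + c + Sv"
  proof cases
    case 1 then show ?thesis using join_u[of a b c'] abc by blast
  next
    case 2 then show ?thesis using join_u[of a c' b] abc by (fastforce simp: ac_simps)
  next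
    case 3 then show ?thesis using join_u[of b c' a] abc by (fastforce simp: ac_simps)
  next
    case 4 then show ?thesis using join_v[of a b c'] abc by (fastforce simp: ac_simps)
  next
    case 5 then show ?thesis using join_v[of a c' b] abc by (fastforce simp: ac_simps)
  next
    case 6 then show ?thesis using join_v[of b c' a] abc by (fastforce simp: ac_simps)
  qed
qed

lemma steiner_bounded_edgeless:
  assumes f: "edge_bounded_pseudometric f" and G: "connected_subgraph V E V' {}"
  shows "steiner_bounded f V' 0"
proof -
  have "f a a + f a b + f a c \<le> 0" if abc: "a \<in> V'" "b \<in> V'" "c \<in> V'" for a b c
  proof -
    have "b = a" "c = a"
      using G abc adj_empty_rtranclp unfolding connected_subgraph_def by simp_all
    moreover have "a \<in> V" using G abc(1) unfolding connected_subgraph_def by auto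
    then have "f a a = 0" using f unfolding edge_bounded_pseudometric_def by blast
    ultimately show ?thesis by simp
  qed
  then show ?thesis unfolding steiner_bounded_def by blast
qed

text \<open>The induction deletes an edge; if this disconnects the subgraph, the two halves are
  recombined through the deleted edge.\<close>
lemma steiner_point:
  assumes f: "edge_bounded_pseudometric f" and G: "connected_subgraph V E V' E'"
  shows "steiner_bounded f V' (sum w E')"
  using G
proof (induction "card E'" arbitrary: V' E' rule: less_induct)
  case less
  have sub: "V' \<subseteq> V" "E' \<subseteq> E"
    using less.prems unfolding connected_subgraph_def by auto
  have "finite E'" using sub(2) finite_edges by (rule finite_subset)
  show ?case
  proof (cases "E' = {}")
    case True
    then show ?thesis using steiner_bounded_edgeless[OF f] less.prems by simp
  next
    case False
    then obtain e where "e \<in> E'" by blast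
    moreover obtain u v where "e = {u, v}"
      using edge_doubleton \<open>e \<in> E'\<close> sub(2) by blast
    ultimately have e: "e = {u, v}" "{u, v} \<in> E'" by simp_all
    have card_less: "card F < card E'" if "F \<subseteq> E' - {e}" for F
      using that \<open>finite E'\<close> \<open>e \<in> E'\<close> by (meson card_Diff1_less card_mono finite_Diff le_less_trans)
    show ?thesis
    proof (cases rule: connected_subgraph_delete_edge[OF less.prems e(2)])
      case 1
      then have "sum w (E' - {e}) \<le> sum w E'"
        using sub(2) by (intro sum_weight_mono) auto
      moreover have "steiner_bounded f V' (sum w (E' - {e}))"
        using less.hyps[OF card_less 1] e(1) by simp
      ultimately show ?thesis by (simp add: steiner_bounded_mono)
    next
      case (2 Vu Eu Vv Ev)
      have "f u v \<le> w e"
        using f e sub(2) unfolding edge_bounded_pseudometric_def by blast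
      moreover have "Vu \<subseteq> V" "Vv \<subseteq> V"
        using 2(1,2) unfolding connected_subgraph_def by auto
      ultimately have "steiner_bounded f V' (sum w Eu + w e + sum w Ev)"
        using steiner_bound_Un[OF f _ _ 2(3,4) _ less.hyps[OF card_less 2(1)]
            less.hyps[OF card_less 2(2)]] 2(5,6) e(1) by auto
      moreover have "sum w Eu + w e + sum w Ev \<le> sum w E'"
        using sum_weight_split[OF sub(2) \<open>e \<in> E'\<close>] 2(6,7) e(1) by simp
      ultimately show ?thesis by (rule steiner_bounded_mono)
    qed
  qed
qed

section \<open>The necessary inequalities\<close>

text \<open>Pairs in different components get a value exceeding every finite \<open>D\<close>, which
  keeps the triangle inequality.\<close>
definition gdist :: "nat \<Rightarrow> nat \<Rightarrow> real" where
  "gdist x y = (if conn_weights V E w {x, y} \<noteq> {} then D V E w {x, y} else sum w E + 1)"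

lemma gdist_nonneg: "0 \<le> gdist x y"
  using D_nonneg sum_weight_nonneg[of E] unfolding gdist_def by simp

lemma gdist_le: "gdist x y \<le> sum w E + 1"
  using D_le_total unfolding gdist_def by fastforce

lemma gdist_triangle: "gdist x z \<le> gdist x y + gdist y z"
proof (cases "conn_weights V E w {x, y} \<noteq> {} \<and> conn_weights V E w {y, z} \<noteq> {}")
  case True
  have "{x, y} \<union> {y, z} = {x, y, z}" by auto
  with D_Un_le[of "{x, y}" "{y, z}"] True
  have "conn_weights V E w {x, y, z} \<noteq> {}" "D V E w {x, y, z} \<le> gdist x y + gdist y z"
    unfolding gdist_def by auto
  moreover have "conn_weights V E w {x, z} \<noteq> {}" "D V E w {x, z} \<le> D V E w {x, y, z}"
    using D_mono[OF \<open>conn_weights V E w {x, y, z} \<noteq> {}\<close>, of "{x, z}"] by auto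
  ultimately show ?thesis unfolding gdist_def by simp
next
  case False
  then have "gdist x y = sum w E + 1 \<or> gdist y z = sum w E + 1"
    unfolding gdist_def by auto
  then show ?thesis using gdist_le[of x z] gdist_nonneg[of x y] gdist_nonneg[of y z] by auto
qed

lemma edge_connected_subgraph:
  assumes "{u, v} \<in> E"
  shows "connected_subgraph V E {u, v} {{u, v}}"
proof -
  obtain x y where "x \<noteq> y" "x \<in> V" "y \<in> V" "{u, v} = {x, y}"
    using edge_doubleton[OF assms] .
  then have "u \<noteq> v" "u \<in> V" "v \<in> V" by (auto simp: doubleton_eq_iff)
  moreover from \<open>u \<noteq> v\<close> have "star_edges u {v} = {{u, v}}" by (auto simp: star_edges_def)
  ultimately show ?thesis
    using connected_subgraph_star_edges[of u V "{v}" E] assms by simp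
qed

lemma gdist_edge_bounded_pseudometric: "edge_bounded_pseudometric gdist"
  unfolding edge_bounded_pseudometric_def
proof (intro conjI allI ballI impI)
  fix x assume "x \<in> V"
  then have G: "connected_subgraph V E {x} {}" by (rule connected_subgraph_singleton)
  then have "conn_weights V E w {x, x} \<noteq> {}" using conn_weights_nonempty by simp
  moreover have "D V E w {x, x} \<le> 0" using D_le[OF G, of "{x, x}"] by simp
  ultimately show "gdist x x = 0" using D_nonneg unfolding gdist_def by force
next
  fix x y
  show "gdist x y = gdist y x" unfolding gdist_def by (simp add: insert_commute)
  assume "{x, y} \<in> E"
  then have "connected_subgraph V E {x, y} {{x, y}}" by (rule edge_connected_subgraph)
  then show "gdist x y \<le> w {x, y}"
    using D_le conn_weights_nonempty unfolding gdist_def by fastforce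
qed (rule gdist_triangle)

lemma gdist_pos:
  assumes "x \<noteq> y"
  shows "0 < gdist x y"
proof (cases "conn_weights V E w {x, y} \<noteq> {}")
  case True
  then obtain V' E' where G: "connected_subgraph V E V' E'" "{x, y} \<subseteq> V'" "D V E w {x, y} = sum w E'"
    by (rule D_attained)
  then have "E' \<noteq> {}"
    using adj_empty_rtranclp assms unfolding connected_subgraph_def by force
  moreover have "E' \<subseteq> E" using G(1) unfolding connected_subgraph_def by simp
  ultimately have "0 < sum w E'"
    using weight_pos finite_edges by (intro sum_pos) (auto intro: finite_subset)
  with True G(3) show ?thesis unfolding gdist_def by simp
next
  case False
  then show ?thesis using sum_weight_nonneg[of E] unfolding gdist_def by simp
qed

lemma D_le_gdist_star:
  assumes "conn_weights V E w {a, b, c} \<noteq> {}"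
  shows "D V E w {a, b, c} \<le> gdist q a + gdist q b + gdist q c"
proof (cases "\<forall>x\<in>{a, b, c}. conn_weights V E w {q, x} \<noteq> {}")
  case True
  have "{q, a} \<union> {q, b} = {q, a, b}" "{q, a, b} \<union> {q, c} = {q, a, b, c}" by auto
  with D_Un_le[of "{q, a}" "{q, b}"] D_Un_le[of "{q, a, b}" "{q, c}"] True
  have "conn_weights V E w {q, a, b, c} \<noteq> {}"
    "D V E w {q, a, b, c} \<le> gdist q a + gdist q b + gdist q c"
    unfolding gdist_def by force+
  moreover have "D V E w {a, b, c} \<le> D V E w {q, a, b, c}"
    using D_mono[OF \<open>conn_weights V E w {q, a, b, c} \<noteq> {}\<close>, of "{a, b, c}"] by auto
  ultimately show ?thesis by simp
next
  case False
  then have "\<exists>x\<in>{a, b, c}. gdist q x = sum w E + 1" unfolding gdist_def by auto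
  then show ?thesis
    using D_le_total[OF assms] gdist_nonneg[of q a] gdist_nonneg[of q b] gdist_nonneg[of q c]
    by auto
qed

lemma steiner_centre_exists:
  assumes "conn_weights V E w {a, b, c} \<noteq> {}"
  obtains p where "p \<in> V" "gdist p a + gdist p b + gdist p c \<le> D V E w {a, b, c}"
proof -
  obtain V' E' where G: "connected_subgraph V E V' E'" "{a, b, c} \<subseteq> V'" "D V E w {a, b, c} = sum w E'"
    using assms by (rule D_attained)
  have "a \<in> V'" "b \<in> V'" "c \<in> V'" using G(2) by auto
  then obtain p where "p \<in> V'" "gdist p a + gdist p b + gdist p c \<le> D V E w {a, b, c}"
    using steiner_point[OF gdist_edge_bounded_pseudometric G(1), unfolded steiner_bounded_def,
        rule_format, of a b c] G(3) by auto
  moreover have "V' \<subseteq> V" using G(1) unfolding connected_subgraph_def by simp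
  ultimately show ?thesis using that by blast
qed

lemma conn_weights_nonempty_subset: "conn_weights V E w S \<noteq> {} \<Longrightarrow> S \<subseteq> V"
  unfolding conn_weights_def connected_subgraph_def by auto

text \<open>With Steiner centres \<open>P\<close>, \<open>Q\<close>, \<open>R\<close> of optimal subgraphs for the triples
  avoiding \<open>k\<close>, \<open>j\<close>, \<open>i\<close>, the remaining triples are bounded by stars centred at
  \<open>i\<close>, \<open>t\<close>, \<open>P\<close>, \<open>Q\<close>, \<open>R\<close>; the inequalities are then sums of triangle
  inequalities.\<close>
lemma D_triple_inequalities:
  assumes "distinct [i, j, k, t]"
    and c: "conn_weights V E w {i, j, k} \<noteq> {}" "conn_weights V E w {i, j, t} \<noteq> {}"
      "conn_weights V E w {i, k, t} \<noteq> {}" "conn_weights V E w {j, k, t} \<noteq> {}"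
  shows "5 * D V E w {i, j, k} \<le> 3 * D V E w {i, j, t} + 3 * D V E w {i, k, t} + 2 * D V E w {j, k, t}"
    and "D V E w {j, k, t} < D V E w {i, j, t} + D V E w {i, k, t}"
proof -
  let ?d = gdist
  have tri: "?d x z \<le> ?d x y + ?d y z" and sym: "?d x y = ?d y x" for x y z
    using gdist_edge_bounded_pseudometric unfolding edge_bounded_pseudometric_def by blast+
  have "i \<in> V" "t \<in> V" using conn_weights_nonempty_subset c(2) by auto
  then have refl: "?d i i = 0" "?d t t = 0"
    using gdist_edge_bounded_pseudometric unfolding edge_bounded_pseudometric_def by blast+
  obtain P where P: "?d P i + ?d P j + ?d P t \<le> D V E w {i, j, t}"
    using steiner_centre_exists[OF c(2)] by blast
  obtain Q where Q: "?d Q i + ?d Q k + ?d Q t \<le> D V E w {i, k, t}"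
    using steiner_centre_exists[OF c(3)] by blast
  obtain R where R: "?d R j + ?d R k + ?d R t \<le> D V E w {j, k, t}"
    using steiner_centre_exists[OF c(4)] by blast
  note star_ijk = D_le_gdist_star[OF c(1)]
  have "D V E w {i, j, k} \<le> ?d i i + ?d i j + ?d i k" "D V E w {i, j, k} \<le> ?d P i + ?d P j + ?d P k"
    "D V E w {i, j, k} \<le> ?d Q i + ?d Q j + ?d Q k" "D V E w {i, j, k} \<le> ?d R i + ?d R j + ?d R k"
    by (fact star_ijk)+
  moreover have "?d i j \<le> ?d i P + ?d P j" "?d i k \<le> ?d i Q + ?d Q k"
    "?d P k \<le> ?d P t + ?d t k" "?d t k \<le> ?d t Q + ?d Q k" "?d Q j \<le> ?d Q t + ?d t j"
    "?d t j \<le> ?d t P + ?d P j" "?d R i \<le> ?d R t + ?d t i" "?d t i \<le> ?d t P + ?d P i"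
    "?d t i \<le> ?d t Q + ?d Q i"
    using tri by blast+
  moreover have "?d i P = ?d P i" "?d i Q = ?d Q i" "?d t Q = ?d Q t" "?d t P = ?d P t"
    using sym by blast+
  ultimately show "5 * D V E w {i, j, k} \<le>
      3 * D V E w {i, j, t} + 3 * D V E w {i, k, t} + 2 * D V E w {j, k, t}"
    using P Q R refl by linarith
  note star_jkt = D_le_gdist_star[OF c(4)]
  have "D V E w {j, k, t} \<le> ?d P j + ?d P k + ?d P t" "D V E w {j, k, t} \<le> ?d Q j + ?d Q k + ?d Q t"
    "D V E w {j, k, t} \<le> ?d t j + ?d t k + ?d t t"
    by (fact star_jkt)+
  moreover have "?d P k \<le> ?d P i + ?d i k" "?d i k \<le> ?d i Q + ?d Q k"
    "?d Q j \<le> ?d Q i + ?d i j" "?d i j \<le> ?d i P + ?d P j"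
    "?d t j \<le> ?d t P + ?d P j" "?d t k \<le> ?d t Q + ?d Q k"
    using tri by blast+
  moreover have "?d i P = ?d P i" "?d i Q = ?d Q i" "?d t Q = ?d Q t" "?d t P = ?d P t"
    using sym by blast+
  moreover have "0 < ?d P t \<or> 0 < ?d Q t \<or> 0 < ?d P i"
    using gdist_pos assms(1) by (cases "P = t") auto
  moreover have "0 \<le> ?d Q t" "0 \<le> ?d P t" "0 \<le> ?d P i" "0 \<le> ?d Q i"
    by (simp_all add: gdist_nonneg)
  ultimately show "D V E w {j, k, t} < D V E w {i, j, t} + D V E w {i, k, t}"
    using P Q refl by linarith
qed

section \<open>Certifying values of \<open>D\<close> by potentials\<close>

lemma edge_bounded_pseudometric_potentials:
  assumes "finite I" "I \<noteq> {}"
    and lip: "\<forall>i\<in>I. \<forall>x y. {x, y} \<in> E \<longrightarrow> \<bar>\<phi> i x - \<phi> i y\<bar> \<le> w {x, y}"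
  shows "edge_bounded_pseudometric (\<lambda>x y. MAX i\<in>I. \<bar>\<phi> i x - \<phi> i y\<bar>)"
  unfolding edge_bounded_pseudometric_def
proof (intro conjI allI ballI impI)
  fix x y z
  have "\<bar>\<phi> i x - \<phi> i z\<bar> \<le> (MAX i\<in>I. \<bar>\<phi> i x - \<phi> i y\<bar>) + (MAX i\<in>I. \<bar>\<phi> i y - \<phi> i z\<bar>)"
    if "i \<in> I" for i
  proof -
    have "\<bar>\<phi> i x - \<phi> i y\<bar> \<le> (MAX i\<in>I. \<bar>\<phi> i x - \<phi> i y\<bar>)"
      "\<bar>\<phi> i y - \<phi> i z\<bar> \<le> (MAX i\<in>I. \<bar>\<phi> i y - \<phi> i z\<bar>)"
      using that assms(1) by (auto intro: Max_ge)
    then show ?thesis by linarith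
  qed
  then show "(MAX i\<in>I. \<bar>\<phi> i x - \<phi> i z\<bar>) \<le>
      (MAX i\<in>I. \<bar>\<phi> i x - \<phi> i y\<bar>) + (MAX i\<in>I. \<bar>\<phi> i y - \<phi> i z\<bar>)"
    using assms(1,2) by simp
  show "(MAX i\<in>I. \<bar>\<phi> i x - \<phi> i y\<bar>) = (MAX i\<in>I. \<bar>\<phi> i y - \<phi> i x\<bar>)"
    by (simp add: abs_minus_commute)
  assume "{x, y} \<in> E"
  then show "(MAX i\<in>I. \<bar>\<phi> i x - \<phi> i y\<bar>) \<le> w {x, y}"
    using assms by simp
qed (use assms(1,2) in simp)

text \<open>Potentials vanishing at the terminals and varying by at most the weight along
  edges certify lower bounds for \<open>D\<close>, dual to the upper bound given by any connected
  subgraph.\<close>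
lemma D_eq_by_potentials:
  assumes lip: "\<forall>s\<in>{a, b, c}. \<forall>x y. {x, y} \<in> E \<longrightarrow> \<bar>\<phi> s x - \<phi> s y\<bar> \<le> w {x, y}"
    and zero: "\<phi> a a = 0" "\<phi> b b = 0" "\<phi> c c = 0"
    and lower: "\<forall>q\<in>V. T \<le> \<phi> a q + \<phi> b q + \<phi> c q"
    and G: "connected_subgraph V E V0 E0" "{a, b, c} \<subseteq> V0" "sum w E0 \<le> T"
  shows "conn_weights V E w {a, b, c} \<noteq> {}" "D V E w {a, b, c} = T"
proof -
  show ne: "conn_weights V E w {a, b, c} \<noteq> {}"
    using conn_weights_nonempty G(1,2) .
  define f where "f x y = (MAX s\<in>{a, b, c}. \<bar>\<phi> s x - \<phi> s y\<bar>)" for x y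
  have f: "edge_bounded_pseudometric f"
    unfolding f_def by (rule edge_bounded_pseudometric_potentials) (use lip in auto)
  have ge: "\<phi> s p \<le> f p s" if "s \<in> {a, b, c}" for s p
  proof -
    have "\<phi> s p \<le> \<bar>\<phi> s p - \<phi> s s\<bar>" using that zero by auto
    also have "\<dots> \<le> f p s" unfolding f_def using that by (intro Max_ge) auto
    finally show ?thesis .
  qed
  obtain V' E' where G': "connected_subgraph V E V' E'" "{a, b, c} \<subseteq> V'" "D V E w {a, b, c} = sum w E'"
    using ne by (rule D_attained)
  then obtain p where p: "p \<in> V'" "f p a + f p b + f p c \<le> sum w E'"
    using steiner_point[OF f G'(1), unfolded steiner_bounded_def, rule_format, of a b c] by auto
  have "p \<in> V" using p(1) G'(1) unfolding connected_subgraph_def by auto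
  then have "T \<le> D V E w {a, b, c}"
    using lower ge[of a p] ge[of b p] ge[of c p] p(2) G'(3) by fastforce
  moreover have "D V E w {a, b, c} \<le> T" using D_le[OF G(1,2)] G(3) by simp
  ultimately show "D V E w {a, b, c} = T" by simp
qed

end

definition realizes ::
    "nat set \<Rightarrow> nat set set \<Rightarrow> (nat set \<Rightarrow> real) \<Rightarrow> nat set \<Rightarrow> (nat \<Rightarrow> real) \<Rightarrow> bool" where
  "realizes V E w T Dh \<longleftrightarrow> pos_weighted_graph V E w \<and> T \<subseteq> V \<and>
    (\<forall>i\<in>T. conn_weights V E w (T - {i}) \<noteq> {} \<and> D V E w (T - {i}) = Dh i)"

definition hat_conditions :: "nat set \<Rightarrow> (nat \<Rightarrow> real) \<Rightarrow> bool" where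
  "hat_conditions T Dh \<longleftrightarrow>
    (\<forall>i\<in>T. \<forall>j\<in>T. \<forall>k\<in>T. \<forall>t\<in>T. i \<noteq> j \<and> i \<noteq> k \<and> i \<noteq> t \<and> j \<noteq> k \<and> j \<noteq> t \<and> k \<noteq> t \<longrightarrow>
       5 * Dh t \<le> 3 * Dh k + 3 * Dh j + 2 * Dh i) \<and>
    (\<forall>i\<in>T. \<forall>j\<in>T. \<forall>k\<in>T. i \<noteq> j \<and> i \<noteq> k \<and> j \<noteq> k \<longrightarrow> Dh i < Dh k + Dh j)"

lemma hat_conditionsD:
  assumes "hat_conditions T Dh" "{i, j, k, t} \<subseteq> T" "distinct [i, j, k, t]"
  shows "5 * Dh t \<le> 3 * Dh k + 3 * Dh j + 2 * Dh i" and "Dh i < Dh k + Dh j"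
  using assms unfolding hat_conditions_def by simp_all

lemma card_4_eq:
  assumes "card T = 4" "{i, j, k, t} \<subseteq> T" "distinct [i, j, k, t]"
  shows "T = {i, j, k, t}"
proof -
  have "finite T" using assms(1) by (intro card_ge_0_finite) simp
  moreover have "card {i, j, k, t} = card T" using assms(1,3) by simp
  ultimately show ?thesis using card_subset_eq[OF _ assms(2)] by simp
qed

lemma realizes_imp_hat_conditions:
  assumes T: "card T = 4" and R: "realizes V E w T Dh"
  shows "hat_conditions T Dh"
proof -
  interpret weighted_graph V E w using R unfolding realizes_def by unfold_locales blast
  have ineqs: "5 * Dh t \<le> 3 * Dh k + 3 * Dh j + 2 * Dh i \<and> Dh i < Dh k + Dh j"
    if "{i, j, k, t} \<subseteq> T" "distinct [i, j, k, t]" for i j k t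
  proof -
    have "T = {i, j, k, t}" using card_4_eq T that .
    moreover from that(2) have "{i, j, k, t} - {t} = {i, j, k}" "{i, j, k, t} - {k} = {i, j, t}"
      "{i, j, k, t} - {j} = {i, k, t}" "{i, j, k, t} - {i} = {j, k, t}" by auto
    ultimately have "conn_weights V E w {i, j, k} \<noteq> {}" "D V E w {i, j, k} = Dh t"
      "conn_weights V E w {i, j, t} \<noteq> {}" "D V E w {i, j, t} = Dh k"
      "conn_weights V E w {i, k, t} \<noteq> {}" "D V E w {i, k, t} = Dh j"
      "conn_weights V E w {j, k, t} \<noteq> {}" "D V E w {j, k, t} = Dh i"
      using R unfolding realizes_def by (metis insertCI)+
    then show ?thesis using D_triple_inequalities[OF that(2)] by simp
  qed
  show ?thesis unfolding hat_conditions_def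
  proof (intro conjI ballI impI)
    fix i j k t assume "i \<in> T" "j \<in> T" "k \<in> T" "t \<in> T"
      "i \<noteq> j \<and> i \<noteq> k \<and> i \<noteq> t \<and> j \<noteq> k \<and> j \<noteq> t \<and> k \<noteq> t"
    then show "5 * Dh t \<le> 3 * Dh k + 3 * Dh j + 2 * Dh i" using ineqs by simp
  next
    fix i j k assume ijk: "i \<in> T" "j \<in> T" "k \<in> T" "i \<noteq> j \<and> i \<noteq> k \<and> j \<noteq> k"
    have "card {i, j, k} < card T" using T by (simp add: card_insert_if)
    then obtain t where "t \<in> T" "t \<notin> {i, j, k}"
      by (metis card_mono finite.emptyI finite_insert leD subsetI)
    then show "Dh i < Dh k + Dh j" using ineqs[of i j k t] ijk by simp
  qed
qed

section \<open>Constructions\<close>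

lemma potential_lipschitz:
  fixes a :: "nat \<Rightarrow> real"
  assumes "0 \<le> a u" "0 \<le> a v"
  shows "\<bar>(if u = s then 0 else a s + a u) - (if v = s then 0 else a s + a v)\<bar> \<le> a u + a v"
  using assms by auto

lemma star_graph_pos_weighted:
  fixes a :: "nat \<Rightarrow> real"
  assumes "finite L" "h \<notin> L" "\<forall>x\<in>L. 0 < a x" "a h = 0"
  shows "pos_weighted_graph (insert h L) (star_edges h L) (sum a)"
proof -
  have "h \<noteq> x" if "x \<in> L" for x
    using that assms(2) by auto
  moreover have "sum a {h, x} = a x" if "h \<noteq> x" for x
    using that assms(4) by simp
  ultimately show ?thesis using assms
    unfolding pos_weighted_graph_def simple_graph_def star_edges_def by fastforce
qed

lemma D_star_graph:
  fixes a :: "nat \<Rightarrow> real"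
  assumes L: "finite L" "h \<notin> L" "\<forall>x\<in>L. 0 < a x" "a h = 0"
    and S: "S \<subseteq> insert h L" "card S = 3"
  shows "conn_weights (insert h L) (star_edges h L) (sum a) S \<noteq> {}"
    and "D (insert h L) (star_edges h L) (sum a) S = sum a S"
proof -
  interpret weighted_graph "insert h L" "star_edges h L" "sum a"
    using star_graph_pos_weighted[OF L] by unfold_locales
  obtain x y z where xyz: "S = {x, y, z}" "x \<noteq> y" "y \<noteq> z" "x \<noteq> z"
    using S(2) unfolding card_3_iff by blast
  have a_nonneg: "0 \<le> a v" if "v \<in> insert h L" for v
    using that L(3,4) by (auto intro: less_imp_le)
  define \<phi> where "\<phi> s v = (if v = s then 0 else a s + a v)" for s v
  have lip: "\<forall>s\<in>{x, y, z}. \<forall>u v. {u, v} \<in> star_edges h L \<longrightarrow> \<bar>\<phi> s u - \<phi> s v\<bar> \<le> sum a {u, v}"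
  proof (intro ballI allI impI)
    fix s u v assume "{u, v} \<in> star_edges h L"
    then have "u \<noteq> v" "u \<in> insert h L" "v \<in> insert h L"
      using L(2) unfolding star_edges_def by (auto simp: doubleton_eq_iff)
    then show "\<bar>\<phi> s u - \<phi> s v\<bar> \<le> sum a {u, v}"
      unfolding \<phi>_def using potential_lipschitz a_nonneg by simp
  qed
  have lower: "\<forall>q\<in>insert h L. sum a S \<le> \<phi> x q + \<phi> y q + \<phi> z q"
    using xyz a_nonneg S(1) unfolding \<phi>_def by auto
  have G: "connected_subgraph (insert h L) (star_edges h L) (insert h S) (star_edges h S)"
    using S(1) by (intro connected_subgraph_star_edges) (auto simp: star_edges_def)
  have "sum (sum a) (star_edges h S) \<le> sum a S"
    using S(1) L(4) a_nonneg xyz by (intro sum_star_edges_le) auto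
  then show "conn_weights (insert h L) (star_edges h L) (sum a) S \<noteq> {}"
    "D (insert h L) (star_edges h L) (sum a) S = sum a S"
    using D_eq_by_potentials[OF lip _ _ _ lower G] xyz by (auto simp: \<phi>_def)
qed

lemma realizes_star:
  fixes a :: "nat \<Rightarrow> real"
  assumes L: "finite L" "h \<notin> L" "\<forall>x\<in>L. 0 < a x" "a h = 0"
    and T: "T \<subseteq> insert h L" "card T = 4" "\<forall>i\<in>T. sum a (T - {i}) = Dh i"
  shows "realizes (insert h L) (star_edges h L) (sum a) T Dh"
proof -
  have "T - {i} \<subseteq> insert h L" "card (T - {i}) = 3" if "i \<in> T" for i
    using T(1,2) that by auto
  then show ?thesis
    unfolding realizes_def using star_graph_pos_weighted[OF L] D_star_graph[OF L] T by auto
qed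

text \<open>With vertex
  weights \<open>a\<close> vanishing on the hubs and edge weights \<open>sum a\<close>, each edge weighs as much
  as its terminal.\<close>
definition gadget_edges :: "nat \<Rightarrow> nat \<Rightarrow> nat \<Rightarrow> nat \<Rightarrow> nat \<Rightarrow> nat \<Rightarrow> nat \<Rightarrow> nat set set" where
  "gadget_edges t j k l hj hk hl =
     star_edges hl {t, j, k} \<union> star_edges hk {t, j, l} \<union> star_edges hj {t, k, l}"

context
  fixes t j k l hj hk hl :: nat and a :: "nat \<Rightarrow> real"
  assumes dist: "distinct [t, j, k, l, hj, hk, hl]"
    and a_hubs: "a hj = 0" "a hk = 0" "a hl = 0"
    and a_t: "0 < a t" and a_jkl: "2 * a t \<le> a j" "2 * a t \<le> a k" "2 * a t \<le> a l"
begin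

lemma gadget_edge:
  assumes "e \<in> gadget_edges t j k l hj hk hl"
  obtains h x where "e = {h, x}" "h \<in> {hj, hk, hl}" "x \<in> {t, j, k, l}"
    "(h, x) \<notin> {(hj, j), (hk, k), (hl, l)}"
  using assms dist unfolding gadget_edges_def star_edges_def by auto

lemma gadget_pos_weighted:
  "pos_weighted_graph {t, j, k, l, hj, hk, hl} (gadget_edges t j k l hj hk hl) (sum a)"
  unfolding pos_weighted_graph_def simple_graph_def
proof (intro conjI ballI)
  fix e assume "e \<in> gadget_edges t j k l hj hk hl"
  then obtain h x where hx: "e = {h, x}" "h \<in> {hj, hk, hl}" "x \<in> {t, j, k, l}"
    by (rule gadget_edge)
  moreover have "h \<noteq> x" using hx(2,3) dist by auto
  moreover have "0 < a x" using hx(3) a_t a_jkl by auto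
  ultimately show "\<exists>u v. u \<noteq> v \<and> u \<in> {t, j, k, l, hj, hk, hl} \<and> v \<in> {t, j, k, l, hj, hk, hl} \<and> e = {u, v}"
    "0 < sum a e"
    using hx(2) a_hubs by auto
qed simp

interpretation gadget: weighted_graph "{t, j, k, l, hj, hk, hl}" "gadget_edges t j k l hj hk hl" "sum a"
  using gadget_pos_weighted by unfold_locales

text \<open>The distance from terminal \<open>s\<close>; the hub opposite \<open>s\<close> is reached through \<open>t\<close>.\<close>
definition gadget_potential :: "nat \<Rightarrow> nat \<Rightarrow> real" where
  "gadget_potential s v = (if v = s then 0
     else if (v, s) \<in> {(hj, j), (hk, k), (hl, l)} then a s + 2 * a t else a s + a v)"

lemma gadget_potential_lipschitz:
  assumes "{u, v} \<in> gadget_edges t j k l hj hk hl" "s \<in> {t, j, k, l}"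
  shows "\<bar>gadget_potential s u - gadget_potential s v\<bar> \<le> sum a {u, v}"
proof -
  obtain h x where hx: "{u, v} = {h, x}" "h \<in> {hj, hk, hl}" "x \<in> {t, j, k, l}"
    "(h, x) \<notin> {(hj, j), (hk, k), (hl, l)}"
    using assms(1) by (rule gadget_edge)
  have "h \<noteq> s" "a h = 0" using hx(2) assms(2) dist a_hubs by auto
  then have pot_h: "gadget_potential s h =
      (if (h, s) \<in> {(hj, j), (hk, k), (hl, l)} then a s + 2 * a t else a s)"
    by (simp add: gadget_potential_def)
  have "gadget_potential s x = (if x = s then 0 else a s + a x)"
    using hx(3) assms(2) dist by (auto simp: gadget_potential_def)
  moreover have "0 \<le> a t" "a t \<le> a x" "0 \<le> a x" "0 \<le> a s"
    using hx(3) assms(2) a_t a_jkl by auto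
  ultimately have "\<bar>gadget_potential s h - gadget_potential s x\<bar> \<le> a x"
    using pot_h hx(4) by auto
  moreover have "sum a {u, v} = a x" unfolding hx(1) using hx(2,3) dist a_hubs by auto
  moreover have "u = h \<and> v = x \<or> u = x \<and> v = h"
    using hx(1) by (simp add: doubleton_eq_iff)
  ultimately show ?thesis by (auto simp: abs_minus_commute)
qed

lemma gadget_potential_ge: "(if q = s then 0 else a s + a q) \<le> gadget_potential s q"
  using a_hubs a_t unfolding gadget_potential_def by auto

lemma gadget_star:
  assumes "h \<in> {hj, hk, hl}" "S \<subseteq> {t, j, k, l}" "star_edges h S \<subseteq> gadget_edges t j k l hj hk hl"
  shows "connected_subgraph {t, j, k, l, hj, hk, hl} (gadget_edges t j k l hj hk hl)
      (insert h S) (star_edges h S)"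
    and "sum (sum a) (star_edges h S) \<le> sum a S"
proof -
  show "connected_subgraph {t, j, k, l, hj, hk, hl} (gadget_edges t j k l hj hk hl)
      (insert h S) (star_edges h S)"
    using assms by (intro connected_subgraph_star_edges) auto
  have "0 \<le> a s" if "s \<in> S" for s using that assms(2) a_t a_jkl by auto
  then show "sum (sum a) (star_edges h S) \<le> sum a S"
    using assms(1,2) a_hubs by (intro sum_star_edges_le) (auto intro: finite_subset)
qed

lemma D_gadget_through_t:
  assumes "(x, y, h) \<in> {(j, k, hl), (j, l, hk), (k, l, hj)}"
  shows "conn_weights {t, j, k, l, hj, hk, hl} (gadget_edges t j k l hj hk hl) (sum a) {t, x, y} \<noteq> {}"
    and "D {t, j, k, l, hj, hk, hl} (gadget_edges t j k l hj hk hl) (sum a) {t, x, y} = a t + a x + a y"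
proof -
  have "x \<noteq> t" "y \<noteq> t" "x \<noteq> y" "0 \<le> a t" "0 \<le> a x" "0 \<le> a y"
    using assms dist a_t a_jkl by auto
  moreover have "0 \<le> a q" if "q \<in> {t, j, k, l, hj, hk, hl}" for q
    using that a_hubs a_t a_jkl by auto
  ultimately have lower: "\<forall>q\<in>{t, j, k, l, hj, hk, hl}. a t + a x + a y \<le>
      gadget_potential t q + gadget_potential x q + gadget_potential y q"
    using gadget_potential_ge[where s = t] gadget_potential_ge[where s = x]
      gadget_potential_ge[where s = y] by (smt (verit))
  have h: "h \<in> {hj, hk, hl}" "{t, x, y} \<subseteq> {t, j, k, l}"
    "star_edges h {t, x, y} \<subseteq> gadget_edges t j k l hj hk hl"
    using assms unfolding gadget_edges_def by auto
  have "sum (sum a) (star_edges h {t, x, y}) \<le> a t + a x + a y"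
    using gadget_star(2)[OF h] assms dist by auto
  moreover have "\<forall>s\<in>{t, x, y}. \<forall>u v. {u, v} \<in> gadget_edges t j k l hj hk hl \<longrightarrow>
      \<bar>gadget_potential s u - gadget_potential s v\<bar> \<le> sum a {u, v}"
  proof (intro ballI allI impI)
    fix s u v assume "s \<in> {t, x, y}" "{u, v} \<in> gadget_edges t j k l hj hk hl"
    then show "\<bar>gadget_potential s u - gadget_potential s v\<bar> \<le> sum a {u, v}"
      using gadget_potential_lipschitz h(2) by (meson subsetD)
  qed
  moreover have "gadget_potential s s = 0" for s by (simp add: gadget_potential_def)
  ultimately show "conn_weights {t, j, k, l, hj, hk, hl} (gadget_edges t j k l hj hk hl) (sum a) {t, x, y} \<noteq> {}"
    and "D {t, j, k, l, hj, hk, hl} (gadget_edges t j k l hj hk hl) (sum a) {t, x, y} = a t + a x + a y"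
    using gadget.D_eq_by_potentials[OF _ _ _ _ lower gadget_star(1)[OF h] subset_insertI] by auto
qed

lemma D_gadget_avoiding_t:
  shows "conn_weights {t, j, k, l, hj, hk, hl} (gadget_edges t j k l hj hk hl) (sum a) {j, k, l} \<noteq> {}"
    and "D {t, j, k, l, hj, hk, hl} (gadget_edges t j k l hj hk hl) (sum a) {j, k, l} =
      2 * a t + a j + a k + a l"
proof -
  have lower: "\<forall>q\<in>{t, j, k, l, hj, hk, hl}. 2 * a t + a j + a k + a l \<le>
      gadget_potential j q + gadget_potential k q + gadget_potential l q"
    using dist a_hubs a_t a_jkl unfolding gadget_potential_def by auto
  have h1: "hl \<in> {hj, hk, hl}" "{t, j, k} \<subseteq> {t, j, k, l}"
      "star_edges hl {t, j, k} \<subseteq> gadget_edges t j k l hj hk hl"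
    and h2: "hk \<in> {hj, hk, hl}" "{t, l} \<subseteq> {t, j, k, l}"
      "star_edges hk {t, l} \<subseteq> gadget_edges t j k l hj hk hl"
    unfolding gadget_edges_def star_edges_def by auto
  have G: "connected_subgraph {t, j, k, l, hj, hk, hl} (gadget_edges t j k l hj hk hl)
      (insert hl {t, j, k} \<union> insert hk {t, l}) (star_edges hl {t, j, k} \<union> star_edges hk {t, l})"
    using gadget_star(1)[OF h1] gadget_star(1)[OF h2] by (intro connected_subgraph_Un) auto
  have "sum (sum a) (star_edges hl {t, j, k} \<union> star_edges hk {t, l})
      \<le> sum a {t, j, k} + sum a {t, l}"
    using gadget.sum_weight_Un_le[OF h1(3) h2(3)] gadget_star(2)[OF h1] gadget_star(2)[OF h2]
    by simp
  also have "\<dots> = 2 * a t + a j + a k + a l" using dist by simp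
  finally have weight: "sum (sum a) (star_edges hl {t, j, k} \<union> star_edges hk {t, l})
      \<le> 2 * a t + a j + a k + a l" .
  have lip: "\<forall>s\<in>{j, k, l}. \<forall>u v. {u, v} \<in> gadget_edges t j k l hj hk hl \<longrightarrow>
      \<bar>gadget_potential s u - gadget_potential s v\<bar> \<le> sum a {u, v}"
  proof (intro ballI allI impI)
    fix s u v assume "s \<in> {j, k, l}" "{u, v} \<in> gadget_edges t j k l hj hk hl"
    then show "\<bar>gadget_potential s u - gadget_potential s v\<bar> \<le> sum a {u, v}"
      using gadget_potential_lipschitz by simp
  qed
  have "gadget_potential s s = 0" for s by (simp add: gadget_potential_def)
  then show "conn_weights {t, j, k, l, hj, hk, hl} (gadget_edges t j k l hj hk hl) (sum a) {j, k, l} \<noteq> {}"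
    and "D {t, j, k, l, hj, hk, hl} (gadget_edges t j k l hj hk hl) (sum a) {j, k, l} =
      2 * a t + a j + a k + a l"
    using gadget.D_eq_by_potentials[OF lip _ _ _ lower G _ weight] by auto
qed

lemma realizes_gadget:
  assumes "Dh t = 2 * a t + a j + a k + a l" "Dh j = a t + a k + a l"
    "Dh k = a t + a j + a l" "Dh l = a t + a j + a k"
  shows "realizes {t, j, k, l, hj, hk, hl} (gadget_edges t j k l hj hk hl) (sum a) {t, j, k, l} Dh"
proof -
  have "{t, j, k, l} - {t} = {j, k, l}" "{t, j, k, l} - {j} = {t, k, l}"
    "{t, j, k, l} - {k} = {t, j, l}" "{t, j, k, l} - {l} = {t, j, k}"
    using dist by auto
  then show ?thesis
    unfolding realizes_def
    using gadget_pos_weighted D_gadget_through_t[of j k hl] D_gadget_through_t[of j l hk]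
      D_gadget_through_t[of k l hj] D_gadget_avoiding_t assms by auto
qed

end

lemma realizable_tight_dominant:
  assumes dist: "distinct [t, j, k, l]" and tight: "Dh j + Dh k + Dh l = 2 * Dh t"
    and tri: "Dh j < Dh k + Dh l" "Dh k < Dh j + Dh l" "Dh l < Dh j + Dh k"
  shows "\<exists>V E w. realizes V E w {t, j, k, l} Dh"
proof -
  define a where "a v = (if v = t then 0 else Dh t - Dh v)" for v
  have "realizes (insert t {j, k, l}) (star_edges t {j, k, l}) (sum a) {t, j, k, l} Dh"
  proof (rule realizes_star)
    show "\<forall>x\<in>{j, k, l}. 0 < a x" using dist tight tri unfolding a_def by auto
    show "\<forall>i\<in>{t, j, k, l}. sum a ({t, j, k, l} - {i}) = Dh i"
      using dist tight unfolding a_def by (auto simp: insert_Diff_if)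
  qed (use dist in \<open>auto simp: a_def\<close>)
  then show ?thesis by blast
qed

lemma realizable_strict_dominant:
  assumes dist: "distinct [t, j, k, l]" and strict: "Dh j + Dh k + Dh l < 2 * Dh t"
    and five: "5 * Dh t \<le> 3 * Dh k + 3 * Dh l + 2 * Dh j" "5 * Dh t \<le> 3 * Dh j + 3 * Dh l + 2 * Dh k"
      "5 * Dh t \<le> 3 * Dh j + 3 * Dh k + 2 * Dh l"
  shows "\<exists>V E w. realizes V E w {t, j, k, l} Dh"
proof -
  define \<sigma> where "\<sigma> = Dh j + Dh k + Dh l"
  define a where "a v = (if v = t then 2 * Dh t - \<sigma>
    else if v \<in> {j, k, l} then \<sigma> - Dh v - Dh t else 0)" for v
  define m where "m = Max {t, j, k, l}"
  have "t \<le> m" "j \<le> m" "k \<le> m" "l \<le> m" unfolding m_def by simp_all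
  then have hubs: "distinct [t, j, k, l, m + 1, m + 2, m + 3]" using dist by simp
  then have "a (m + 1) = 0" "a (m + 2) = 0" "a (m + 3) = 0" unfolding a_def by auto
  moreover have a: "a t = 2 * Dh t - \<sigma>" "a j = \<sigma> - Dh j - Dh t" "a k = \<sigma> - Dh k - Dh t"
    "a l = \<sigma> - Dh l - Dh t"
    using dist unfolding a_def by auto
  moreover have "0 < a t" "2 * a t \<le> a j" "2 * a t \<le> a k" "2 * a t \<le> a l"
    using strict five unfolding a \<sigma>_def by simp_all
  moreover have "Dh t = 2 * a t + a j + a k + a l" "Dh j = a t + a k + a l"
    "Dh k = a t + a j + a l" "Dh l = a t + a j + a k"
    unfolding a \<sigma>_def by simp_all
  ultimately have "realizes {t, j, k, l, m + 1, m + 2, m + 3}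
      (gadget_edges t j k l (m + 1) (m + 2) (m + 3)) (sum a) {t, j, k, l} Dh"
    by (intro realizes_gadget[OF hubs])
  then show ?thesis by blast
qed

lemma hat_conditions_dominant_realizable:
  assumes dist: "distinct [t, j, k, l]" and H: "hat_conditions {t, j, k, l} Dh"
    and dom: "Dh j + Dh k + Dh l \<le> 2 * Dh t"
  shows "\<exists>V E w. realizes V E w {t, j, k, l} Dh"
proof -
  have perms: "{j, l, k, t} \<subseteq> {t, j, k, l}" "{k, l, j, t} \<subseteq> {t, j, k, l}"
    "{l, k, j, t} \<subseteq> {t, j, k, l}" "distinct [j, l, k, t]" "distinct [k, l, j, t]"
    "distinct [l, k, j, t]"
    using dist by auto
  have tri: "Dh j < Dh k + Dh l" "Dh k < Dh j + Dh l" "Dh l < Dh j + Dh k"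
    using hat_conditionsD(2)[OF H] perms by blast+
  have five: "5 * Dh t \<le> 3 * Dh k + 3 * Dh l + 2 * Dh j"
    "5 * Dh t \<le> 3 * Dh j + 3 * Dh l + 2 * Dh k" "5 * Dh t \<le> 3 * Dh j + 3 * Dh k + 2 * Dh l"
    using hat_conditionsD(1)[OF H] perms by blast+
  show ?thesis
  proof (cases "Dh j + Dh k + Dh l = 2 * Dh t")
    case True
    then show ?thesis using realizable_tight_dominant[OF dist _ tri] by blast
  next
    case False
    then show ?thesis using realizable_strict_dominant[OF dist _ five] dom by simp
  qed
qed

lemma hat_conditions_balanced_realizable:
  assumes T: "card T = 4" and bal: "\<forall>t\<in>T. 2 * Dh t < sum Dh (T - {t})"
  shows "\<exists>V E w. realizes V E w T Dh"
proof -
  have "finite T" using T by (intro card_ge_0_finite) simp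
  define h where "h = Max T + 1"
  have "h \<notin> T"
  proof
    assume "h \<in> T"
    then have "h \<le> Max T" using Max_ge \<open>finite T\<close> by blast
    then show False unfolding h_def by simp
  qed
  define a where "a v = (if v \<in> T then sum Dh T / 3 - Dh v else 0)" for v
  have "realizes (insert h T) (star_edges h T) (sum a) T Dh"
  proof (rule realizes_star[OF \<open>finite T\<close> \<open>h \<notin> T\<close>])
    show "\<forall>x\<in>T. 0 < a x"
      using bal \<open>finite T\<close> unfolding a_def by (auto simp: sum_diff1)
    show "\<forall>i\<in>T. sum a (T - {i}) = Dh i"
      using T \<open>finite T\<close> unfolding a_def by (auto simp: sum_subtractf sum_diff1)
  qed (use \<open>h \<notin> T\<close> T in \<open>auto simp: a_def\<close>)
  then show ?thesis by blast
qed

lemma hat_conditions_imp_realizable: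
  assumes T: "card T = 4" and H: "hat_conditions T Dh"
  shows "\<exists>V E w. realizes V E w T Dh"
proof (cases "\<exists>t\<in>T. sum Dh (T - {t}) \<le> 2 * Dh t")
  case True
  then obtain t where t: "t \<in> T" "sum Dh (T - {t}) \<le> 2 * Dh t" by blast
  have "card (T - {t}) = 3" using T t(1) by simp
  then obtain j k l where jkl: "T - {t} = {j, k, l}" "j \<noteq> k" "k \<noteq> l" "j \<noteq> l"
    unfolding card_3_iff by blast
  then have "T = {t, j, k, l}" "distinct [t, j, k, l]" using t(1) by auto
  moreover have "Dh j + Dh k + Dh l \<le> 2 * Dh t" using t(2) jkl by simp
  ultimately show ?thesis using hat_conditions_dominant_realizable H by simp
next
  case False
  then have "\<forall>t\<in>T. 2 * Dh t < sum Dh (T - {t})" by (simp add: not_le)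
  then show ?thesis by (rule hat_conditions_balanced_realizable[OF T])
qed

theorem realizable_iff_hat_conditions:
  assumes "card T = 4"
  shows "(\<exists>V E w. realizes V E w T Dh) \<longleftrightarrow> hat_conditions T Dh"
  using assms realizes_imp_hat_conditions hat_conditions_imp_realizable by blast

theorem theorem4p2:
  fixes Dh :: "nat \<Rightarrow> real"
  assumes pos: "\<forall>i\<in>{1,2,3,4::nat}. Dh i > 0"
  shows "(\<exists>V E w. pos_weighted_graph V E w \<and> {1,2,3,4} \<subseteq> V \<and>
            (\<forall>i\<in>{1,2,3,4::nat}. conn_weights V E w ({1,2,3,4} - {i}) \<noteq> {} \<and> D_hat V E w i = Dh i))
         \<longleftrightarrow>
         ((\<forall>i\<in>{1,2,3,4::nat}. \<forall>j\<in>{1,2,3,4::nat}. \<forall>k\<in>{1,2,3,4::nat}. \<forall>t\<in>{1,2,3,4::nat}.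
             i \<noteq> j \<and> i \<noteq> k \<and> i \<noteq> t \<and> j \<noteq> k \<and> j \<noteq> t \<and> k \<noteq> t \<longrightarrow>
             5 * Dh t \<le> 3 * Dh k + 3 * Dh j + 2 * Dh i) \<and>
          (\<forall>i\<in>{1,2,3,4::nat}. \<forall>j\<in>{1,2,3,4::nat}. \<forall>k\<in>{1,2,3,4::nat}.
             i \<noteq> j \<and> i \<noteq> k \<and> j \<noteq> k \<longrightarrow> Dh i < Dh k + Dh j))"
  using realizable_iff_hat_conditions[of "{1, 2, 3, 4}" Dh]
  unfolding realizes_def hat_conditions_def D_hat_def by simp

end
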